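(* Let $\mathbb{R}^n_s$ be $\mathbb{R}^n$ with a non-degenerate symmetric bilinear form of signature $(n-s,s)$, and let $G\subset\mathrm{Iso}(\mathbb{R}^n_s)\subset\mathrm{GL}_{n+1}(\mathbb{R})$ be a real Zariski-closed subgroup whose centralizer in $\mathrm{Iso}(\mathbb{R}^n_s)$ acts transitively on $\mathbb{R}^n$, with Lie algebra $\mathfrak{g}\subset\mathrm{Mat}_{n+1}(\mathbb{R})$. Then $G=I+\mathfrak{g}$ is an affine subspace of $\mathrm{Mat}_{n+1}(\mathbb{R})$; let $\nabla^G$ be the natural flat affine connection it inherits. Fix $p\in\mathbb{R}^n$, let $F_p=G.p$ (an affine subspace of $\mathbb{R}^n$), and let $\nabla$ be the pullback to $G$ of the natural flat affine connection of $F_p$ via the orbit map $\theta:G\to F_p$, $g\mapsto g.p$ (a diffeomorphism). Then $(G,\nabla^G)$ is affinely diffeomorphic to $(G,\nabla)$.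
   Context: Elements of $\mathrm{Iso}(\mathbb{R}^n_s)$ are affine maps $(I+A,v)$ identified with matrices $\begin{pmatrix}I+A&v\\0&1\end{pmatrix}$. *)

theory Defs
  imports "HOL-Analysis.Analysis"
begin

text \<open>Mat_{n+1}(R) is modelled as real^('n option)^('n option): the index None is the
  extra (n+1)-st coordinate, the indices Some i are the coordinates of R^n.\<close>

type_synonym 'n amat = "real ^ ('n option) ^ ('n option)"

text \<open>Standard non-degenerate symmetric bilinear form of signature (n-s,s):
  the coordinates in S (with card S = s) carry the sign -1.\<close>
definition sform :: "'n::finite set \<Rightarrow> real ^ 'n \<Rightarrow> real ^ 'n \<Rightarrow> real" where
  "sform S x y = (\<Sum>i\<in>UNIV. (if i \<in> S then -1 else 1) * x $ i * y $ i)"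

definition lin_part :: "'n::finite amat \<Rightarrow> real ^ 'n ^ 'n" where
  "lin_part M = (\<chi> i j. M $ Some i $ Some j)"

definition trans_part :: "'n::finite amat \<Rightarrow> real ^ 'n" where
  "trans_part M = (\<chi> i. M $ Some i $ None)"

definition Iso :: "'n::finite set \<Rightarrow> 'n amat set" where
  "Iso S = {M. (\<forall>j. M $ None $ Some j = 0) \<and> M $ None $ None = 1 \<and>
              (\<forall>x y. sform S (lin_part M *v x) (lin_part M *v y) = sform S x y)}"

definition ext :: "real ^ 'n::finite \<Rightarrow> real ^ ('n option)" where
  "ext x = (\<chi> j. case j of None \<Rightarrow> 1 | Some i \<Rightarrow> x $ i)"

definition act :: "'n::finite amat \<Rightarrow> real ^ 'n \<Rightarrow> real ^ 'n" where
  "act M x = (\<chi> i. (M *v ext x) $ Some i)"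

inductive_set poly_fun :: "('k::finite amat \<Rightarrow> real) set" where
  const: "(\<lambda>M. c) \<in> poly_fun"
| coord: "(\<lambda>M. M $ i $ j) \<in> poly_fun"
| add: "p \<in> poly_fun \<Longrightarrow> q \<in> poly_fun \<Longrightarrow> (\<lambda>M. p M + q M) \<in> poly_fun"
| mult: "p \<in> poly_fun \<Longrightarrow> q \<in> poly_fun \<Longrightarrow> (\<lambda>M. p M * q M) \<in> poly_fun"

definition zariski_closed :: "'k::finite amat set \<Rightarrow> bool" where
  "zariski_closed A \<longleftrightarrow> (\<exists>P \<subseteq> poly_fun. A = {M. \<forall>p\<in>P. p M = 0})"

definition matrix_subgroup :: "'k::finite amat set \<Rightarrow> bool" where
  "matrix_subgroup G \<longleftrightarrow> mat 1 \<in> G \<and> (\<forall>A\<in>G. invertible A \<and> matrix_inv A \<in> G) \<and>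
     (\<forall>A\<in>G. \<forall>B\<in>G. A ** B \<in> G)"

definition centralizer_in :: "'k::finite amat set \<Rightarrow> 'k amat set \<Rightarrow> 'k amat set" where
  "centralizer_in H G = {h \<in> H. \<forall>g\<in>G. h ** g = g ** h}"

primrec mat_pow :: "real ^ 'k ^ 'k \<Rightarrow> nat \<Rightarrow> real ^ 'k ^ 'k" where
  "mat_pow A 0 = mat 1"
| "mat_pow A (Suc k) = A ** mat_pow A k"

definition mat_exp :: "real ^ 'k::finite ^ 'k \<Rightarrow> real ^ 'k ^ 'k" where
  "mat_exp A = (\<Sum>k. (1 / fact k) *\<^sub>R mat_pow A k)"

definition lie_algebra :: "'k::finite amat set \<Rightarrow> 'k amat set" where
  "lie_algebra G = {A. \<forall>t::real. mat_exp (t *\<^sub>R A) \<in> G}"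

text \<open>A map between affine subspaces (with their natural flat affine connections) is
  affine iff it preserves affine combinations.\<close>
definition affine_on :: "'a::real_vector set \<Rightarrow> ('a \<Rightarrow> 'b::real_vector) \<Rightarrow> bool" where
  "affine_on A f \<longleftrightarrow> (\<forall>x\<in>A. \<forall>y\<in>A. \<forall>t::real.
      f ((1 - t) *\<^sub>R x + t *\<^sub>R y) = (1 - t) *\<^sub>R f x + t *\<^sub>R f y)"

end

theory Submission
  imports Defs "HOL-Computational_Algebra.Polynomial"
begin

text \<open>
  If an isometry g commutes with isometries acting transitively on \<open>\<real>\<^sup>n\<close>, its displacement
  \<open>x \<mapsto> g.x - x\<close> has constant length for the form; polarising, and using nondegeneracy, gives
  \<open>(g - I)\<^sup>2 = 0\<close>. So every element of G is \<open>I + N\<close> with \<open>N\<^sup>2 = 0\<close>. Zariski closedness upgrades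
  \<open>(I + N)\<^sup>k = I + kN\<close> to the whole line \<open>I + tN \<subseteq> G\<close>; the square-zero condition for
  \<open>(I + sN)(I + tM)\<close> gives \<open>NM + MN = 0 = NMN\<close>, whence \<open>(I + N/2)(I + M)(I + N/2) = I + N + M\<close>.
  Thus \<open>V = {N. I + N \<in> G}\<close> is a linear subspace, and it is the Lie algebra: \<open>exp(tN) = I + tN\<close>,
  and conversely \<open>A = lim m (exp(A/m) - I)\<close> lies in the closed set V. Finally the orbit map
  \<open>g \<mapsto> g.p\<close> is linear in the matrix g, hence affine on G, and injective because the transitive
  centralizer propagates \<open>g.p\<close> to all of \<open>\<real>\<^sup>n\<close>; so the identity of G is an affine diffeomorphism
  between the two connections.
\<close>

lemma sum_UNIV_option:
  "(\<Sum>j\<in>(UNIV::'n::finite option set). f j) = f None + (\<Sum>i\<in>UNIV. f (Some i))"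
proof -
  have "(\<Sum>j\<in>(UNIV::'n option set). f j) = (\<Sum>j\<in>insert None (range Some). f j)"
    by (simp add: UNIV_option_conv[symmetric])
  also have "\<dots> = f None + (\<Sum>j\<in>range Some. f j)"
    by (subst sum.insert) auto
  also have "(\<Sum>j\<in>range Some. f j) = (\<Sum>i\<in>UNIV. f (Some i))"
    by (subst sum.reindex) (auto simp: inj_on_def)
  finally show ?thesis .
qed

lemma act_eq: "act M x = lin_part M *v x + trans_part M"
  by (simp add: act_def lin_part_def trans_part_def matrix_vector_mult_def ext_def vec_eq_iff
      sum_UNIV_option)

lemma linear_act: "linear (\<lambda>M. act M x)"
  by (rule linearI)
    (simp_all add: act_def vec_eq_iff matrix_vector_mult_def sum.distrib sum_distrib_left
      algebra_simps)

lemma affine_matrix_eqI: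
  fixes M N :: "'n::finite amat"
  assumes "M $ None = N $ None" "lin_part M = lin_part N" "trans_part M = trans_part N"
  shows "M = N"
proof -
  have "M $ a $ b = N $ a $ b" for a b
    using assms by (cases a; cases b) (auto simp: vec_eq_iff lin_part_def trans_part_def)
  then show ?thesis by (simp add: vec_eq_iff)
qed

lemma
  fixes M N :: "'n::finite amat"
  assumes "N $ None = 0"
  shows lin_part_mult: "lin_part (M ** N) = lin_part M ** lin_part N"
    and trans_part_mult: "trans_part (M ** N) = lin_part M *v trans_part N"
  using assms
  by (simp_all add: vec_eq_iff lin_part_def trans_part_def matrix_matrix_mult_def
      matrix_vector_mult_def sum_UNIV_option)

lemma mult_bottom_row: "(M ** N) $ None = 0" if "(M :: 'n::finite amat) $ None = 0"
  using that by (simp add: vec_eq_iff matrix_matrix_mult_def)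

lemma Iso_bottom_row: "h \<in> Iso S \<Longrightarrow> h $ None = axis None 1"
  by (auto simp: Iso_def vec_eq_iff axis_def split: option.split)

lemma mat_one_bottom_row: "(mat 1 :: 'n::finite amat) $ None = axis None 1"
  by (simp add: mat_def vec_eq_iff axis_def)

lemma matrix_vector_mult_ext: "M $ None = axis None 1 \<Longrightarrow> M *v ext x = ext (act M x)"
  by (auto simp: vec_eq_iff matrix_vector_mult_def ext_def act_def axis_def sum_UNIV_option
      split: option.split)

lemma act_mult:
  assumes "h \<in> Iso S"
  shows "act (g ** h) x = act g (act h x)"
proof -
  have "(g ** h) *v ext x = g *v ext (act h x)"
    by (simp add: matrix_vector_mul_assoc[symmetric] matrix_vector_mult_ext Iso_bottom_row[OF assms])
  then show ?thesis by (simp add: act_def)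
qed

lemma act_commute:
  assumes "g \<in> Iso S" "h \<in> Iso S" "h ** g = g ** h"
  shows "act g (act h x) = act h (act g x)"
  by (metis act_mult assms)

lemma act_diff: "act h y - act h z = lin_part h *v (y - z)"
  by (simp add: act_eq matrix_vector_mult_diff_distrib)

lemma displacement_commuting_isometry:
  assumes "g \<in> Iso S" "h \<in> Iso S" "h ** g = g ** h"
  shows "act g (act h x) - act h x = lin_part h *v (act g x - x)"
  by (simp add: act_commute[OF assms] act_diff)

lemma Iso_eqI:
  assumes "g \<in> Iso S" "g' \<in> Iso S" "\<And>x. act g x = act g' x"
  shows "g = g'"
proof (rule affine_matrix_eqI)
  show "g $ None = g' $ None"
    using assms(1,2) by (simp add: Iso_bottom_row)
  show trans: "trans_part g = trans_part g'"
    using assms(3)[of 0] by (simp add: act_eq)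
  have "lin_part g *v x = lin_part g' *v x" for x
    using assms(3)[of x] by (simp add: act_eq trans)
  then show "lin_part g = lin_part g'"
    by (simp add: matrix_eq)
qed

section \<open>Isometries with a displacement of constant length\<close>

lemma sform_add_left: "sform S (x + y) z = sform S x z + sform S y z"
  by (simp add: sform_def sum.distrib[symmetric] algebra_simps)
lemma sform_add_right: "sform S z (x + y) = sform S z x + sform S z y"
  by (simp add: sform_def sum.distrib[symmetric] algebra_simps)
lemma sform_neg_left: "sform S (- x) z = - sform S x z"
  by (simp add: sform_def sum_negf[symmetric])
lemma sform_neg_right: "sform S z (- x) = - sform S z x"
  by (simp add: sform_def sum_negf[symmetric])
lemma sform_diff_left: "sform S (x - y) z = sform S x z - sform S y z"
  by (simp add: sform_def sum_subtractf[symmetric] algebra_simps)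
lemma sform_diff_right: "sform S z (x - y) = sform S z x - sform S z y"
  by (simp add: sform_def sum_subtractf[symmetric] algebra_simps)
lemma sform_commute: "sform S x y = sform S y x"
  by (simp add: sform_def algebra_simps)

lemmas sform_bilinear_simps = sform_add_left sform_add_right sform_neg_left sform_neg_right
  sform_diff_left sform_diff_right

lemma sform_nondegenerate: "(\<And>y. sform S z y = 0) \<Longrightarrow> z = 0"
proof -
  assume z: "\<And>y. sform S z y = 0"
  have "(if i \<in> S then -1 else 1) * z $ i = 0" for i
    using z[of "axis i 1"] by (simp add: sform_def axis_def if_distrib cong: if_cong)
  then have "z $ i = 0" for i
    by (metis mult_minus1 mult_1 neg_equal_0_iff_equal)
  then show ?thesis by (simp add: vec_eq_iff)
qed

lemma square_zero_of_constant_displacement: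
  fixes L :: "real ^ 'n::finite ^ 'n"
  assumes isom: "\<And>x y. sform S (L *v x) (L *v y) = sform S x y"
    and const: "\<And>x. sform S ((L - mat 1) *v x + v) ((L - mat 1) *v x + v) = sform S v v"
  shows "(L - mat 1) ** (L - mat 1) = 0" "(L - mat 1) *v v = 0"
proof -
  define A where "A = L - mat 1"
  have neg: "A *v (- x) = - (A *v x)" for x
    by (simp add: matrix_vector_mult_def vec_eq_iff sum_negf[symmetric])
  have v_commute: "sform S v (A *v x) = sform S (A *v x) v" for x
    by (rule sform_commute)
  \<comment> \<open>comparing the displacements at x and -x separates the quadratic and the linear term\<close>
  have expand: "sform S (A *v x) (A *v x) + 2 * sform S (A *v x) v = 0"
    "sform S (A *v x) (A *v x) - 2 * sform S (A *v x) v = 0" for x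
    using const[of x] const[of "- x"]
    by (simp_all add: A_def[symmetric] neg sform_bilinear_simps v_commute)
  have isotropic: "sform S (A *v x) (A *v x) = 0" for x
    using expand[of x] by linarith
  have orth_v: "sform S (A *v x) v = 0" for x
    using expand[of x] by linarith
  have orth: "sform S (A *v x) (A *v y) = 0" for x y
    using isotropic[of "x + y"] isotropic[of x] isotropic[of y] sform_commute[of S "A *v x" "A *v y"]
    by (simp add: matrix_vector_right_distrib sform_bilinear_simps)
  have L: "L *v x = x + A *v x" for x
    by (simp add: A_def matrix_vector_mult_diff_rdistrib)
  have skew: "sform S (A *v x) y = - sform S x (A *v y)" for x y
    using isom[of x y] orth[of x y] by (simp add: L sform_bilinear_simps)
  have "A *v (A *v x) = 0" for x
    by (rule sform_nondegenerate[of S]) (metis skew orth neg_0_equal_iff_equal)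
  then show "A ** A = 0"
    by (simp add: matrix_eq matrix_vector_mul_assoc[symmetric])
  show "A *v v = 0"
    by (rule sform_nondegenerate[of S]) (metis skew v_commute orth_v neg_0_equal_iff_equal)
qed

lemma isometry_square_zero_of_constant_displacement:
  assumes g: "g \<in> Iso S"
    and const: "\<And>x. sform S (act g x - x) (act g x - x) = sform S (act g 0) (act g 0)"
  shows "(g - mat 1) ** (g - mat 1) = 0"
proof -
  define N where "N = g - mat 1"
  have lin: "lin_part N = lin_part g - mat 1" and trans: "trans_part N = trans_part g"
    by (simp_all add: N_def vec_eq_iff lin_part_def trans_part_def mat_def)
  have bottom: "N $ None = 0"
    using Iso_bottom_row[OF g] by (simp add: N_def mat_one_bottom_row)
  have "act g x - x = (lin_part g - mat 1) *v x + trans_part g" for x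
    by (simp add: act_eq matrix_vector_mult_diff_rdistrib)
  moreover have "act g 0 = trans_part g"
    by (simp add: act_eq)
  ultimately have "(lin_part g - mat 1) ** (lin_part g - mat 1) = 0"
    and "(lin_part g - mat 1) *v trans_part g = 0"
    using square_zero_of_constant_displacement[of S "lin_part g" "trans_part g"] g const
    by (simp_all add: Iso_def)
  then have "lin_part (N ** N) = 0" "trans_part (N ** N) = 0"
    using bottom by (simp_all add: lin_part_mult trans_part_mult lin trans)
  then have "N ** N = 0"
    using mult_bottom_row[OF bottom]
    by (intro affine_matrix_eqI) (simp_all add: lin_part_def trans_part_def vec_eq_iff)
  then show ?thesis by (simp add: N_def)
qed


section \<open>Zariski-closed sets and lines\<close>

lemma poly_fun_on_line:
  assumes "p \<in> poly_fun"
  shows "\<exists>q. \<forall>t. p (X + t *\<^sub>R N) = poly q t"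
  using assms
proof induction
  case (const c)
  show ?case by (rule exI[of _ "[:c:]"]) simp
next
  case (coord i j)
  show ?case by (rule exI[of _ "[:X $ i $ j, N $ i $ j:]"]) (simp add: algebra_simps)
next
  case (add p q)
  then obtain a b where "\<forall>t. p (X + t *\<^sub>R N) = poly a t" "\<forall>t. q (X + t *\<^sub>R N) = poly b t"
    by blast
  then show ?case by (intro exI[of _ "a + b"]) simp
next
  case (mult p q)
  then obtain a b where "\<forall>t. p (X + t *\<^sub>R N) = poly a t" "\<forall>t. q (X + t *\<^sub>R N) = poly b t"
    by blast
  then show ?case by (intro exI[of _ "a * b"]) simp
qed

lemma zariski_closed_line:
  assumes "zariski_closed G" "\<And>k::nat. X + real k *\<^sub>R N \<in> G"
  shows "X + t *\<^sub>R N \<in> G"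
proof -
  obtain P where P: "P \<subseteq> poly_fun" "G = {M. \<forall>p\<in>P. p M = 0}"
    using assms(1) unfolding zariski_closed_def by blast
  have "p (X + t *\<^sub>R N) = 0" if "p \<in> P" for p
  proof -
    obtain q where q: "\<And>t. p (X + t *\<^sub>R N) = poly q t"
      using poly_fun_on_line[of p X N] P(1) \<open>p \<in> P\<close> by blast
    have "poly q (real k) = 0" for k
      using assms(2)[of k] q[of "real k"] \<open>p \<in> P\<close> P(2) by auto
    then have "range real \<subseteq> {x. poly q x = 0}"
      by auto
    then have "\<not> finite {x. poly q x = 0}"
      using infinite_UNIV_nat inj_of_nat finite_imageD finite_subset by blast
    then have "q = 0" using poly_roots_finite by blast
    then show ?thesis by (simp add: q)
  qed
  then show ?thesis using P(2) by auto
qed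

lemma matrix_add_rdistrib: "(A + B) ** C = A ** C + B ** (C :: real ^ 'a ^ 'b)"
  by (simp add: matrix_matrix_mult_def vec_eq_iff sum.distrib[symmetric] algebra_simps)

lemma matrix_scaleR_left: "(c *\<^sub>R A) ** B = c *\<^sub>R (A ** (B :: real ^ 'a ^ 'b))"
  by (simp add: scalar_matrix_assoc)

lemma matrix_scaleR_right: "A ** (c *\<^sub>R B) = c *\<^sub>R (A ** (B :: real ^ 'a ^ 'b))"
  by (simp add: matrix_scalar_ac scalar_matrix_assoc)

lemmas matrix_ring_simps = matrix_add_ldistrib matrix_add_rdistrib matrix_scaleR_left
  matrix_scaleR_right matrix_mul_assoc

lemma square_zero_sum_conditions:
  fixes N M :: "real ^ 'a ^ 'a"
  assumes NN: "N ** N = 0" and MM: "M ** M = 0"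
    and W: "\<And>s t. (s *\<^sub>R N + t *\<^sub>R M + (s * t) *\<^sub>R (N ** M))
                  ** (s *\<^sub>R N + t *\<^sub>R M + (s * t) *\<^sub>R (N ** M)) = 0"
  shows "N ** M + M ** N = 0" "N ** M ** N = 0"
proof -
  have NN': "X ** N ** N = 0" and MM': "X ** M ** M = 0" for X :: "real ^ 'a ^ 'a"
    by (metis NN MM matrix_mul_assoc times0_right)+
  have expanded: "(s * t) *\<^sub>R (N ** M + M ** N) + (s * t * t) *\<^sub>R (M ** N ** M)
      + (s * s * t) *\<^sub>R (N ** M ** N) + (s * s * t * t) *\<^sub>R (N ** M ** N ** M) = 0" for s t
    using W[of s t] by (simp add: matrix_ring_simps NN MM NN' MM' algebra_simps)
  have entry: "(s * t) * (N ** M + M ** N) $ i $ j + (s * t * t) * (M ** N ** M) $ i $ j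
      + (s * s * t) * (N ** M ** N) $ i $ j + (s * s * t * t) * (N ** M ** N ** M) $ i $ j = 0"
    for s t i j
    using arg_cong[OF expanded[of s t], of "\<lambda>X. X $ i $ j"] by simp
  \<comment> \<open>evaluating the polynomial identity at s, t = \<plusminus>1 separates its coefficients\<close>
  have "(N ** M + M ** N) $ i $ j = 0 \<and> (N ** M ** N) $ i $ j = 0" for i j
    using entry[of 1 1 i j] entry[of 1 "-1" i j] entry[of "-1" 1 i j] entry[of "-1" "-1" i j]
    by simp
  then show "N ** M + M ** N = 0" "N ** M ** N = 0"
    by (simp_all add: vec_eq_iff)
qed

lemma symmetric_product_eq_sum:
  fixes N M :: "real ^ 'a ^ 'a"
  assumes NN: "N ** N = 0" and anti: "N ** M + M ** N = 0" and NMN: "N ** M ** N = 0"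
  shows "(mat 1 + (1/2) *\<^sub>R N) ** (mat 1 + M) ** (mat 1 + (1/2) *\<^sub>R N) = mat 1 + (N + M)"
proof -
  have NN': "X ** N ** N = 0" for X :: "real ^ 'a ^ 'a"
    by (metis NN matrix_mul_assoc times0_right)
  have "(mat 1 + (1/2) *\<^sub>R N) ** (mat 1 + M) ** (mat 1 + (1/2) *\<^sub>R N)
      = mat 1 + (N + M) + (1/2) *\<^sub>R (N ** M + M ** N) + (1/4) *\<^sub>R (N ** M ** N)"
    by (simp add: matrix_ring_simps NN NN' algebra_simps) (simp add: vec_eq_iff)
  then show ?thesis by (simp add: anti NMN)
qed

section \<open>The matrix exponential\<close>

definition matrix_l1_norm :: "real ^ 'a ^ 'b \<Rightarrow> real" where
  "matrix_l1_norm X = (\<Sum>i\<in>UNIV. \<Sum>j\<in>UNIV. \<bar>X $ i $ j\<bar>)"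

lemma matrix_l1_norm_nonneg: "0 \<le> matrix_l1_norm X"
  unfolding matrix_l1_norm_def by (intro sum_nonneg) auto

lemma norm_le_matrix_l1_norm: "norm X \<le> matrix_l1_norm X"
proof -
  have "norm X = L2_set (\<lambda>i. norm (X $ i)) UNIV" by (simp add: norm_vec_def)
  also have "\<dots> \<le> (\<Sum>i\<in>UNIV. norm (X $ i))" by (rule L2_set_le_sum) auto
  also have "\<dots> \<le> matrix_l1_norm X"
    unfolding matrix_l1_norm_def by (intro sum_mono norm_le_l1_cart)
  finally show ?thesis .
qed

lemma matrix_l1_norm_mult: "matrix_l1_norm (X ** Y) \<le> matrix_l1_norm X * matrix_l1_norm Y"
proof -
  have row: "(\<Sum>j\<in>UNIV. \<bar>Y $ k $ j\<bar>) \<le> matrix_l1_norm Y" for k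
    unfolding matrix_l1_norm_def by (rule member_le_sum) (auto intro: sum_nonneg)
  have "\<bar>(X ** Y) $ i $ j\<bar> \<le> (\<Sum>k\<in>UNIV. \<bar>X $ i $ k\<bar> * \<bar>Y $ k $ j\<bar>)" for i j
    unfolding matrix_matrix_mult_def by (simp add: abs_mult[symmetric] sum_abs)
  then have "matrix_l1_norm (X ** Y) \<le> (\<Sum>i\<in>UNIV. \<Sum>j\<in>UNIV. \<Sum>k\<in>UNIV. \<bar>X $ i $ k\<bar> * \<bar>Y $ k $ j\<bar>)"
    unfolding matrix_l1_norm_def by (intro sum_mono) auto
  also have "\<dots> = (\<Sum>i\<in>UNIV. \<Sum>k\<in>UNIV. \<bar>X $ i $ k\<bar> * (\<Sum>j\<in>UNIV. \<bar>Y $ k $ j\<bar>))"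
    by (intro sum.cong refl, subst sum.swap) (simp add: sum_distrib_left)
  also have "\<dots> \<le> (\<Sum>i\<in>UNIV. \<Sum>k\<in>UNIV. \<bar>X $ i $ k\<bar> * matrix_l1_norm Y)"
    by (intro sum_mono mult_left_mono row) auto
  also have "\<dots> = matrix_l1_norm X * matrix_l1_norm Y"
    by (simp add: matrix_l1_norm_def sum_distrib_right)
  finally show ?thesis .
qed

lemma matrix_l1_norm_mat_pow:
  "matrix_l1_norm (mat_pow A k) \<le> matrix_l1_norm (mat 1 :: real ^ 'a ^ 'a) * matrix_l1_norm A ^ k"
  for A :: "real ^ 'a ^ 'a"
proof (induction k)
  case 0
  show ?case by simp
next
  case (Suc k)
  have "matrix_l1_norm (mat_pow A (Suc k)) \<le> matrix_l1_norm A * matrix_l1_norm (mat_pow A k)"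
    using matrix_l1_norm_mult by simp
  also have "\<dots> \<le> matrix_l1_norm A * (matrix_l1_norm (mat 1 :: real ^ 'a ^ 'a) * matrix_l1_norm A ^ k)"
    by (intro mult_left_mono Suc matrix_l1_norm_nonneg)
  finally show ?case by (simp add: algebra_simps)
qed

lemma mat_pow_scaleR: "mat_pow (t *\<^sub>R A) k = (t ^ k) *\<^sub>R mat_pow A k"
  by (induction k) (simp_all add: matrix_scaleR_left matrix_scaleR_right)

lemma mat_exp_scaleR: "mat_exp (t *\<^sub>R A) = (\<Sum>k. (t ^ k / fact k) *\<^sub>R mat_pow A k)"
  unfolding mat_exp_def mat_pow_scaleR by simp

lemma mat_exp_square_zero:
  fixes X :: "real ^ 'a ^ 'a"
  assumes "X ** X = 0"
  shows "mat_exp X = mat 1 + X"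
proof -
  have "mat_pow X (Suc (Suc k)) = 0" for k
    using assms by (simp add: matrix_mul_assoc)
  then have "mat_pow X n = 0" if "n \<notin> {0, 1}" for n
    using that by (metis One_nat_def insert_iff not0_implies_Suc)
  then have "mat_exp X = (\<Sum>n\<in>{0, 1}. (1 / fact n) *\<^sub>R mat_pow X n)"
    unfolding mat_exp_def by (intro suminf_finite) auto
  then show ?thesis by simp
qed

definition exp_majorant :: "real ^ 'a ^ 'a \<Rightarrow> nat \<Rightarrow> real" where
  "exp_majorant A k = matrix_l1_norm (mat 1 :: real ^ 'a ^ 'a) * (matrix_l1_norm A ^ k / fact k)"

lemma exp_majorant_nonneg: "0 \<le> exp_majorant A k"
  by (simp add: exp_majorant_def matrix_l1_norm_nonneg)

lemma summable_exp_majorant: "summable (\<lambda>k. \<bar>t\<bar> ^ k * exp_majorant A k)"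
  using summable_mult[OF summable_exp[of "\<bar>t\<bar> * matrix_l1_norm A"],
      of "matrix_l1_norm (mat 1 :: real ^ 'a ^ 'a)"]
  by (simp add: exp_majorant_def power_mult_distrib divide_inverse algebra_simps)

lemma norm_mat_exp_term_le:
  "norm ((t ^ k / fact k) *\<^sub>R mat_pow A k) \<le> \<bar>t\<bar> ^ k * exp_majorant A k"
proof -
  have "norm ((t ^ k / fact k) *\<^sub>R mat_pow A k) = (\<bar>t\<bar> ^ k / fact k) * norm (mat_pow A k)"
    by (simp add: power_abs)
  also have "\<dots> \<le> (\<bar>t\<bar> ^ k / fact k) * (matrix_l1_norm (mat 1 :: real ^ 'a ^ 'a) * matrix_l1_norm A ^ k)"
    by (intro mult_left_mono order_trans[OF norm_le_matrix_l1_norm matrix_l1_norm_mat_pow]) auto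
  finally show ?thesis by (simp add: exp_majorant_def field_simps)
qed

lemma norm_mat_exp_remainder_le:
  "norm (mat_exp (t *\<^sub>R A) - mat 1 - t *\<^sub>R A) \<le> (\<Sum>k. \<bar>t\<bar> ^ (k + 2) * exp_majorant A (k + 2))"
proof -
  define f where "f k = (t ^ k / fact k) *\<^sub>R mat_pow A k" for k
  have f_le: "norm (f k) \<le> \<bar>t\<bar> ^ k * exp_majorant A k" for k
    unfolding f_def by (rule norm_mat_exp_term_le)
  have summable_tail: "summable (\<lambda>k. \<bar>t\<bar> ^ (k + 2) * exp_majorant A (k + 2))"
    using summable_exp_majorant by (rule summable_ignore_initial_segment)
  have summable_f: "summable f"
    by (rule summable_comparison_test'[OF summable_exp_majorant f_le])
  have summable_norm_tail: "summable (\<lambda>k. norm (f (k + 2)))"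
  proof (rule summable_comparison_test'[OF summable_tail])
    show "norm (norm (f (k + 2))) \<le> \<bar>t\<bar> ^ (k + 2) * exp_majorant A (k + 2)" for k
      unfolding real_norm_def abs_norm_cancel by (rule f_le)
  qed
  have "mat_exp (t *\<^sub>R A) = (\<Sum>k. f (k + 2)) + (\<Sum>k<2. f k)"
    unfolding mat_exp_scaleR f_def[symmetric] by (rule suminf_split_initial_segment[OF summable_f])
  also have "(\<Sum>k<2. f k) = mat 1 + t *\<^sub>R A"
    by (simp add: f_def numeral_2_eq_2)
  finally have "norm (mat_exp (t *\<^sub>R A) - mat 1 - t *\<^sub>R A) = norm (\<Sum>k. f (k + 2))"
    by (simp add: algebra_simps)
  also have "\<dots> \<le> (\<Sum>k. norm (f (k + 2)))"
    by (rule summable_norm[OF summable_norm_tail])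
  also have "\<dots> \<le> (\<Sum>k. \<bar>t\<bar> ^ (k + 2) * exp_majorant A (k + 2))"
    by (rule suminf_le[OF f_le summable_norm_tail summable_tail])
  finally show ?thesis .
qed

lemma mat_exp_remainder_bound:
  assumes t: "\<bar>t\<bar> \<le> 1"
  shows "norm (mat_exp (t *\<^sub>R A) - mat 1 - t *\<^sub>R A) \<le> t\<^sup>2 * (\<Sum>k. exp_majorant A (k + 2))"
proof -
  have "summable (exp_majorant A)"
    using summable_exp_majorant[of 1] by simp
  then have summable_tail: "summable (\<lambda>k. exp_majorant A (k + 2))"
    by (rule summable_ignore_initial_segment)
  have "(\<Sum>k. \<bar>t\<bar> ^ (k + 2) * exp_majorant A (k + 2)) \<le> (\<Sum>k. t\<^sup>2 * exp_majorant A (k + 2))"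
  proof (rule suminf_le[OF _ summable_ignore_initial_segment[OF summable_exp_majorant]
        summable_mult[OF summable_tail]])
    fix k
    have "\<bar>t\<bar> ^ k * exp_majorant A (k + 2) \<le> exp_majorant A (k + 2)"
      using t exp_majorant_nonneg[of A "k + 2"] by (simp add: mult_left_le_one_le power_le_one)
    then have "t\<^sup>2 * (\<bar>t\<bar> ^ k * exp_majorant A (k + 2)) \<le> t\<^sup>2 * exp_majorant A (k + 2)"
      by (simp add: mult_left_mono)
    moreover have "\<bar>t\<bar> ^ (k + 2) = t\<^sup>2 * \<bar>t\<bar> ^ k"
      by (metis power_add power2_abs mult.commute)
    ultimately show "\<bar>t\<bar> ^ (k + 2) * exp_majorant A (k + 2) \<le> t\<^sup>2 * exp_majorant A (k + 2)"
      by (metis mult.assoc)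
  qed
  also have "\<dots> = t\<^sup>2 * (\<Sum>k. exp_majorant A (k + 2))"
    by (rule suminf_mult[OF summable_tail])
  finally show ?thesis
    using norm_mat_exp_remainder_le order_trans by blast
qed

lemma mem_subspace_of_mat_exp:
  fixes A :: "real ^ 'a ^ 'a"
  assumes V: "subspace V" and exp: "\<And>t. mat_exp (t *\<^sub>R A) - mat 1 \<in> V"
  shows "A \<in> V"
proof -
  define K where "K = (\<Sum>k. exp_majorant A (k + 2))"
  note K = mat_exp_remainder_bound[of _ A, folded K_def]
  define u where "u m = inverse (real (Suc m))" for m
  define f where "f m = inverse (u m) *\<^sub>R (mat_exp (u m *\<^sub>R A) - mat 1)" for m
  have u_pos: "0 < u m" and u_le: "u m \<le> 1" for m
    by (simp_all add: u_def field_simps)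
  have "f m \<in> V" for m
    unfolding f_def by (rule subspace_scale[OF V exp])
  moreover have "f \<longlonglongrightarrow> A"
  proof (rule LIM_zero_cancel, rule Lim_null_comparison)
    have "f m - A = inverse (u m) *\<^sub>R (mat_exp (u m *\<^sub>R A) - mat 1 - u m *\<^sub>R A)" for m
      using u_pos[of m] by (simp add: f_def algebra_simps)
    then have "norm (f m - A) = inverse (u m) * norm (mat_exp (u m *\<^sub>R A) - mat 1 - u m *\<^sub>R A)"
      for m
      using u_pos[of m] by simp
    also have "\<dots> m \<le> inverse (u m) * ((u m)\<^sup>2 * K)" for m
      using K[of "u m"] u_pos[of m] u_le[of m] by (intro mult_left_mono) auto
    also have "\<dots> m = u m * K" for m
      using u_pos[of m] by (simp add: power2_eq_square field_simps)
    finally show "\<forall>\<^sub>F m in sequentially. norm (f m - A) \<le> u m * K"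
      by simp
    show "(\<lambda>m. u m * K) \<longlonglongrightarrow> 0"
      unfolding u_def by (intro tendsto_mult_left_zero LIMSEQ_inverse_real_of_nat)
  qed
  ultimately show ?thesis
    using closed_subspace[OF V] closed_sequentially by blast
qed


lemma affine_on_linear: "linear f \<Longrightarrow> affine_on A f"
  by (simp add: affine_on_def linear_add linear_scale)

lemma affine_image_affine_on:
  assumes "affine A" "affine_on A f"
  shows "affine (f ` A)"
  unfolding affine_alt
proof (intro ballI allI)
  fix x y and t :: real
  assume "x \<in> f ` A" "y \<in> f ` A"
  then obtain a b where ab: "a \<in> A" "b \<in> A" "x = f a" "y = f b" by blast
  then have "(1 - t) *\<^sub>R a + t *\<^sub>R b \<in> A"
    using assms(1) by (simp add: affine_alt)
  moreover have "(1 - t) *\<^sub>R x + t *\<^sub>R y = f ((1 - t) *\<^sub>R a + t *\<^sub>R b)"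
    using assms(2) ab by (simp add: affine_on_def)
  ultimately show "(1 - t) *\<^sub>R x + t *\<^sub>R y \<in> f ` A"
    by simp
qed

lemma affine_on_inv_into:
  assumes "affine A" "affine_on A f" "inj_on f A"
  shows "affine_on (f ` A) (inv_into A f)"
  unfolding affine_on_def
proof (intro ballI allI)
  fix x y and t :: real
  assume "x \<in> f ` A" "y \<in> f ` A"
  then obtain a b where ab: "a \<in> A" "b \<in> A" "x = f a" "y = f b" by blast
  then have "(1 - t) *\<^sub>R a + t *\<^sub>R b \<in> A"
    using assms(1) by (simp add: affine_alt)
  moreover have "(1 - t) *\<^sub>R x + t *\<^sub>R y = f ((1 - t) *\<^sub>R a + t *\<^sub>R b)"
    using assms(2) ab by (simp add: affine_on_def)
  ultimately show "inv_into A f ((1 - t) *\<^sub>R x + t *\<^sub>R y)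
      = (1 - t) *\<^sub>R inv_into A f x + t *\<^sub>R inv_into A f y"
    using ab assms(3) by (simp add: inv_into_f_f)
qed

lemma affine_on_cong:
  assumes "affine A" "\<And>x. x \<in> A \<Longrightarrow> f x = g x" "affine_on A f"
  shows "affine_on A g"
  using assms by (simp add: affine_on_def affine_alt)

section \<open>Subgroups with a transitive centralizer\<close>

locale centrally_transitive_isometry_group =
  fixes S :: "'n::finite set" and G :: "'n amat set"
  assumes subset_Iso: "G \<subseteq> Iso S"
    and subgroup: "matrix_subgroup G"
    and zariski: "zariski_closed G"
    and centralizer_transitive: "\<forall>x y. \<exists>h\<in>centralizer_in (Iso S) G. act h x = y"
begin

definition directions :: "'n amat set" where
  "directions = {N. mat 1 + N \<in> G}"

lemma one_mem: "mat 1 \<in> G"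
  using subgroup by (simp add: matrix_subgroup_def)

lemma mult_mem: "A \<in> G \<Longrightarrow> B \<in> G \<Longrightarrow> A ** B \<in> G"
  using subgroup by (simp add: matrix_subgroup_def)

lemma commuting_isometry:
  assumes "g \<in> G"
  obtains h where "h \<in> Iso S" "h ** g = g ** h" "act h x = y"
proof -
  obtain h where "h \<in> centralizer_in (Iso S) G" "act h x = y"
    using centralizer_transitive by blast
  then show thesis
    using that assms by (auto simp: centralizer_in_def)
qed

lemma square_zero:
  assumes "mat 1 + N \<in> G"
  shows "N ** N = 0"
proof -
  let ?g = "mat 1 + N"
  have g: "?g \<in> Iso S" using assms subset_Iso by blast
  \<comment> \<open>a commuting isometry moving 0 to x carries the displacement at 0 to the displacement at x\<close>
  have "sform S (act ?g x - x) (act ?g x - x) = sform S (act ?g 0) (act ?g 0)" for x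
  proof -
    obtain h where h: "h \<in> Iso S" "h ** ?g = ?g ** h" "act h 0 = x"
      using commuting_isometry[OF assms] by blast
    have "act ?g x - x = lin_part h *v (act ?g 0 - 0)"
      using displacement_commuting_isometry[OF g h(1,2), of 0] h(3) by simp
    then show ?thesis using h(1) by (simp add: Iso_def)
  qed
  then show ?thesis
    using isometry_square_zero_of_constant_displacement[OF g] by simp
qed

lemma nat_multiple_mem: "mat 1 + N \<in> G \<Longrightarrow> mat 1 + real k *\<^sub>R N \<in> G"
proof (induction k)
  case 0
  show ?case using one_mem by simp
next
  case (Suc k)
  then have "(mat 1 + N) ** (mat 1 + real k *\<^sub>R N) \<in> G"
    by (intro mult_mem) auto
  then show ?case
    using square_zero[OF Suc.prems] by (simp add: matrix_ring_simps algebra_simps)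
qed

lemma multiple_mem: "mat 1 + N \<in> G \<Longrightarrow> mat 1 + t *\<^sub>R N \<in> G"
  using zariski_closed_line[OF zariski nat_multiple_mem] .

lemma sum_mem:
  assumes N: "mat 1 + N \<in> G" and M: "mat 1 + M \<in> G"
  shows "mat 1 + (N + M) \<in> G"
proof -
  have "(mat 1 + s *\<^sub>R N) ** (mat 1 + t *\<^sub>R M)
      = mat 1 + (s *\<^sub>R N + t *\<^sub>R M + (s * t) *\<^sub>R (N ** M))" for s t
    by (simp add: matrix_ring_simps algebra_simps)
  moreover have "(mat 1 + s *\<^sub>R N) ** (mat 1 + t *\<^sub>R M) \<in> G" for s t
    using mult_mem multiple_mem N M by blast
  ultimately have "mat 1 + (s *\<^sub>R N + t *\<^sub>R M + (s * t) *\<^sub>R (N ** M)) \<in> G" for s t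
    by metis
  then have "(s *\<^sub>R N + t *\<^sub>R M + (s * t) *\<^sub>R (N ** M))
      ** (s *\<^sub>R N + t *\<^sub>R M + (s * t) *\<^sub>R (N ** M)) = 0" for s t
    by (rule square_zero)
  then have "N ** M + M ** N = 0" "N ** M ** N = 0"
    by (rule square_zero_sum_conditions[OF square_zero[OF N] square_zero[OF M]])+
  moreover have "(mat 1 + (1/2) *\<^sub>R N) ** (mat 1 + M) ** (mat 1 + (1/2) *\<^sub>R N) \<in> G"
    using mult_mem multiple_mem N M by blast
  ultimately show ?thesis
    using symmetric_product_eq_sum[OF square_zero[OF N]] by simp
qed

lemma subspace_directions: "subspace directions"
  unfolding subspace_def directions_def using one_mem sum_mem multiple_mem by auto

lemma lie_algebra_eq_directions: "lie_algebra G = directions"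
proof
  show "directions \<subseteq> lie_algebra G"
  proof
    fix N assume N: "N \<in> directions"
    have "(t *\<^sub>R N) ** (t *\<^sub>R N) = 0" for t
      using square_zero N by (simp add: directions_def matrix_scaleR_left matrix_scaleR_right)
    then show "N \<in> lie_algebra G"
      using multiple_mem N by (simp add: lie_algebra_def directions_def mat_exp_square_zero)
  qed
  show "lie_algebra G \<subseteq> directions"
  proof
    fix A assume "A \<in> lie_algebra G"
    then have "mat_exp (t *\<^sub>R A) - mat 1 \<in> directions" for t
      by (simp add: lie_algebra_def directions_def)
    then show "A \<in> directions"
      by (rule mem_subspace_of_mat_exp[OF subspace_directions])
  qed
qed

lemma eq_image_directions: "G = (\<lambda>A. mat 1 + A) ` directions"
  by (force simp: directions_def image_iff intro: exI[of _ "g - mat 1" for g])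

lemma affine_G: "affine G"
  using affine_translation[of directions "mat 1"] subspace_imp_affine[OF subspace_directions]
  by (simp add: eq_image_directions[symmetric])

lemma inj_on_orbit_map: "inj_on (\<lambda>g. act g p) G"
proof (rule inj_onI)
  fix g g' assume g: "g \<in> G" "g' \<in> G" and eq: "act g p = act g' p"
  have "act g y = act g' y" for y
  proof -
    obtain h where h: "h \<in> centralizer_in (Iso S) G" "act h p = y"
      using centralizer_transitive by blast
    have "act k y = act h (act k p)" if "k \<in> G" for k
      using act_commute[of k S h p] that h subset_Iso by (auto simp: centralizer_in_def)
    then show ?thesis using g eq by simp
  qed
  then show "g = g'"
    using g subset_Iso by (intro Iso_eqI) auto
qed

end

theorem corollary4p3:
  fixes S :: "'n::finite set" and G :: "'n amat set" and p :: "real ^ 'n"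
  assumes "G \<subseteq> Iso S"
    and "matrix_subgroup G"
    and "zariski_closed G"
    and "\<forall>x y. \<exists>h\<in>centralizer_in (Iso S) G. act h x = y"
  shows "subspace (lie_algebra G)
    \<and> G = (\<lambda>A. mat 1 + A) ` lie_algebra G
    \<and> affine ((\<lambda>g. act g p) ` G)
    \<and> bij_betw (\<lambda>g. act g p) G ((\<lambda>g. act g p) ` G)
    \<and> (\<exists>\<phi>. bij_betw \<phi> G G
         \<and> affine_on G ((\<lambda>g. act g p) \<circ> \<phi>)
         \<and> affine_on ((\<lambda>g. act g p) ` G) (inv_into G \<phi> \<circ> inv_into G (\<lambda>g. act g p)))"
proof -
  interpret centrally_transitive_isometry_group S G
    using assms by unfold_locales
  let ?\<theta> = "\<lambda>g. act g p"
  have \<theta>_affine: "affine_on G ?\<theta>"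
    by (rule affine_on_linear[OF linear_act])
  have "affine_on (?\<theta> ` G) (inv_into G id \<circ> inv_into G ?\<theta>)"
  proof (rule affine_on_cong[OF _ _ affine_on_inv_into[OF affine_G \<theta>_affine inj_on_orbit_map]])
    show "affine (?\<theta> ` G)"
      by (rule affine_image_affine_on[OF affine_G \<theta>_affine])
    show "inv_into G ?\<theta> y = (inv_into G id \<circ> inv_into G ?\<theta>) y" if "y \<in> ?\<theta> ` G" for y
      using that inv_into_into[OF that] by (simp add: inv_into_f_f)
  qed
  then show ?thesis
    using subspace_directions eq_image_directions affine_image_affine_on[OF affine_G \<theta>_affine]
      inj_on_orbit_map \<theta>_affine
    by (auto simp: lie_algebra_eq_directions inj_on_imp_bij_betw intro!: exI[of _ id])
qed

end
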